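(* Let $S,T$ be left inverse semi-braces, $\sigma:T\to\mathrm{Aut}(S)$ a homomorphism from $(T,\cdot)$ into the automorphism group of the left inverse semi-brace $S$ (write ${}^ua=\sigma(u)(a)$), $\delta:S\to\mathrm{End}(T)$ a map into the endomorphism semigroup of $(T,+)$ (write $u^a=\delta(a)(u)$), and $\mathfrak b:S\times S\to T$ a $\delta$-cocycle such that $$\mathfrak b\left(a\,{}^ub,\lambda_a({}^uc)\right)+(uv)^{\lambda_a({}^uc)}+u\left(\mathfrak b\left({}^{u^{-1}}(a^{-1}),c\right)+(u^{-1})^c\right)=u\left(\mathfrak b(b,c)+v^c\right)$$ for all $a,b,c\in S$ and $u,v\in T$. Then $S\times T$ with $$(a,u)+(b,v)=\left(a+b,\ \mathfrak b(a,b)+u^b+v\right),\qquad (a,u)(b,v)=(a\,{}^ub,\,uv)$$ is a left inverse semi-brace (the asymmetric product of $S$ and $T$ via $\sigma$, $\delta$, $\mathfrak b$).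
   Context: An inverse semigroup is a semigroup $(S,\cdot)$ in which for each $a$ there is a unique $a^{-1}$ with $aa^{-1}a=a$, $a^{-1}aa^{-1}=a^{-1}$. A left inverse semi-brace is a triple $(S,+,\cdot)$ with $(S,+)$ a semigroup, $(S,\cdot)$ an inverse semigroup and $a(b+c)=ab+a(a^{-1}+c)$ for all $a,b,c$; set $\lambda_a(b)=a(a^{-1}+b)$. An automorphism of the left inverse semi-brace $S$ is a bijection preserving both operations. Given semigroups $(S,+)$, $(T,+)$ and a map $\delta:S\to\mathrm{End}(T,+)$ with $u^a=\delta(a)(u)$, a $\delta$-cocycle is a map $\mathfrak b:S\times S\to T$ such that $\mathfrak b(a+b,c)+\mathfrak b(a,b)^c+(u^b)^c+v^c=\mathfrak b(a,b+c)+u^{b+c}+\mathfrak b(b,c)+v^c$ for all $a,b,c\in S$, $u,v\in T$. *)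

theory Defs
  imports Main
begin

definition assoc_op :: "('a \<Rightarrow> 'a \<Rightarrow> 'a) \<Rightarrow> bool" where
  "assoc_op f \<longleftrightarrow> (\<forall>a b c. f (f a b) c = f a (f b c))"

definition inverse_semigroup :: "('a \<Rightarrow> 'a \<Rightarrow> 'a) \<Rightarrow> bool" where
  "inverse_semigroup mul \<longleftrightarrow> assoc_op mul \<and>
     (\<forall>a. \<exists>!b. mul (mul a b) a = a \<and> mul (mul b a) b = b)"

definition inv_sg :: "('a \<Rightarrow> 'a \<Rightarrow> 'a) \<Rightarrow> 'a \<Rightarrow> 'a" where
  "inv_sg mul a = (THE b. mul (mul a b) a = a \<and> mul (mul b a) b = b)"

definition left_inverse_semi_brace :: "('a \<Rightarrow> 'a \<Rightarrow> 'a) \<Rightarrow> ('a \<Rightarrow> 'a \<Rightarrow> 'a) \<Rightarrow> bool" where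
  "left_inverse_semi_brace add mul \<longleftrightarrow> assoc_op add \<and> inverse_semigroup mul \<and>
     (\<forall>a b c. mul a (add b c) = add (mul a b) (mul a (add (inv_sg mul a) c)))"

definition lam :: "('a \<Rightarrow> 'a \<Rightarrow> 'a) \<Rightarrow> ('a \<Rightarrow> 'a \<Rightarrow> 'a) \<Rightarrow> 'a \<Rightarrow> 'a \<Rightarrow> 'a" where
  "lam add mul a b = mul a (add (inv_sg mul a) b)"

definition semi_brace_aut :: "('a \<Rightarrow> 'a \<Rightarrow> 'a) \<Rightarrow> ('a \<Rightarrow> 'a \<Rightarrow> 'a) \<Rightarrow> ('a \<Rightarrow> 'a) \<Rightarrow> bool" where
  "semi_brace_aut add mul f \<longleftrightarrow> bij f \<and>
     (\<forall>a b. f (add a b) = add (f a) (f b)) \<and> (\<forall>a b. f (mul a b) = mul (f a) (f b))"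

definition add_endo :: "('b \<Rightarrow> 'b \<Rightarrow> 'b) \<Rightarrow> ('b \<Rightarrow> 'b) \<Rightarrow> bool" where
  "add_endo add f \<longleftrightarrow> (\<forall>u v. f (add u v) = add (f u) (f v))"

(* delta-cocycle; delta a u stands for u^a *)
definition delta_cocycle ::
  "('a \<Rightarrow> 'a \<Rightarrow> 'a) \<Rightarrow> ('b \<Rightarrow> 'b \<Rightarrow> 'b) \<Rightarrow> ('a \<Rightarrow> 'b \<Rightarrow> 'b) \<Rightarrow> ('a \<Rightarrow> 'a \<Rightarrow> 'b) \<Rightarrow> bool" where
  "delta_cocycle addS addT delta bc \<longleftrightarrow>
     (\<forall>a b c u v.
        addT (addT (addT (bc (addS a b) c) (delta c (bc a b))) (delta c (delta b u))) (delta c v)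
      = addT (addT (addT (bc a (addS b c)) (delta (addS b c) u)) (bc b c)) (delta c v))"

end

theory Submission
  imports Defs
begin

(* The additive structure is a cocycle extension, whose associativity is exactly the cocycle
   identity; the multiplicative structure is the semidirect product of inverse semigroups, whose
   inverse is (a,u)^-1 = (u^-1 a^-1, u^-1) because sigma sends every idempotent of T to the
   identity (an idempotent bijection is the identity). In the left brace law the second coordinate
   is then the distributivity of T combined with the compatibility condition on bc. *)

definition asym_add :: "('a \<Rightarrow> 'a \<Rightarrow> 'a) \<Rightarrow> ('b \<Rightarrow> 'b \<Rightarrow> 'b) \<Rightarrow> ('a \<Rightarrow> 'b \<Rightarrow> 'b) \<Rightarrow>
    ('a \<Rightarrow> 'a \<Rightarrow> 'b) \<Rightarrow> 'a \<times> 'b \<Rightarrow> 'a \<times> 'b \<Rightarrow> 'a \<times> 'b" where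
  "asym_add addS addT delta bc = (\<lambda>(a, u) (b, v). (addS a b, addT (addT (bc a b) (delta b u)) v))"

definition semidirect_mul :: "('a \<Rightarrow> 'a \<Rightarrow> 'a) \<Rightarrow> ('b \<Rightarrow> 'b \<Rightarrow> 'b) \<Rightarrow> ('b \<Rightarrow> 'a \<Rightarrow> 'a) \<Rightarrow>
    'a \<times> 'b \<Rightarrow> 'a \<times> 'b \<Rightarrow> 'a \<times> 'b" where
  "semidirect_mul mulS mulT sigma = (\<lambda>(a, u) (b, v). (mulS a (sigma u b), mulT u v))"

lemma asym_add_Pair [simp]:
  "asym_add addS addT delta bc (a, u) (b, v) = (addS a b, addT (addT (bc a b) (delta b u)) v)"
  by (simp add: asym_add_def)

lemma semidirect_mul_Pair [simp]:
  "semidirect_mul mulS mulT sigma (a, u) (b, v) = (mulS a (sigma u b), mulT u v)"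
  by (simp add: semidirect_mul_def)

lemma inverse_semigroup_assoc:
  "inverse_semigroup mul \<Longrightarrow> mul (mul a b) c = mul a (mul b c)"
  unfolding inverse_semigroup_def assoc_op_def by blast

lemma inv_sg_regular:
  assumes "inverse_semigroup mul"
  shows "mul (mul a (inv_sg mul a)) a = a"
    and "mul (mul (inv_sg mul a) a) (inv_sg mul a) = inv_sg mul a"
proof -
  from assms have "\<exists>!b. mul (mul a b) a = a \<and> mul (mul b a) b = b"
    unfolding inverse_semigroup_def by blast
  then have "mul (mul a (inv_sg mul a)) a = a \<and> mul (mul (inv_sg mul a) a) (inv_sg mul a) = inv_sg mul a"
    unfolding inv_sg_def by (rule theI')
  then show "mul (mul a (inv_sg mul a)) a = a"
    and "mul (mul (inv_sg mul a) a) (inv_sg mul a) = inv_sg mul a" by auto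
qed

lemma inv_sg_eqI:
  assumes "inverse_semigroup mul" "mul (mul a b) a = a" "mul (mul b a) b = b"
  shows "inv_sg mul a = b"
proof -
  from assms(1) have "\<exists>!b. mul (mul a b) a = a \<and> mul (mul b a) b = b"
    unfolding inverse_semigroup_def by blast
  then show ?thesis
    unfolding inv_sg_def by (rule the1_equality) (use assms in auto)
qed

lemma inverse_semigroupI:
  assumes "assoc_op mul" "\<And>a. mul (mul a (i a)) a = a" "\<And>a. mul (mul (i a) a) (i a) = i a"
    and "\<And>a b. mul (mul a b) a = a \<Longrightarrow> mul (mul b a) b = b \<Longrightarrow> b = i a"
  shows "inverse_semigroup mul"
  unfolding inverse_semigroup_def using assms by blast

lemma inv_sg_idempotent:
  assumes "inverse_semigroup mul"
  shows "mul (mul a (inv_sg mul a)) (mul a (inv_sg mul a)) = mul a (inv_sg mul a)"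
    and "mul (mul (inv_sg mul a) a) (mul (inv_sg mul a) a) = mul (inv_sg mul a) a"
  by (metis assms inverse_semigroup_assoc inv_sg_regular)+

lemma bij_idempotent_eq_id:
  assumes "bij f" "\<And>x. f (f x) = f x"
  shows "f x = x"
  using assms by (metis bij_is_inj injD)

locale semidirect_inverse_semigroup =
  fixes mulS :: "'a \<Rightarrow> 'a \<Rightarrow> 'a" and mulT :: "'b \<Rightarrow> 'b \<Rightarrow> 'b" and sigma :: "'b \<Rightarrow> 'a \<Rightarrow> 'a"
  assumes inverse_S: "inverse_semigroup mulS"
    and inverse_T: "inverse_semigroup mulT"
    and sigma_bij: "bij (sigma u)"
    and sigma_mulS: "sigma u (mulS a b) = mulS (sigma u a) (sigma u b)"
    and sigma_mulT: "sigma (mulT u v) a = sigma u (sigma v a)"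
begin

abbreviation "iS \<equiv> inv_sg mulS"
abbreviation "iT \<equiv> inv_sg mulT"
abbreviation "mul \<equiv> semidirect_mul mulS mulT sigma"

lemma sigma_idempotent_eq_id:
  assumes "mulT e e = e"
  shows "sigma e a = a"
  by (rule bij_idempotent_eq_id[OF sigma_bij]) (metis assms sigma_mulT)

lemma sigma_mulT_inv_sg [simp]:
  "sigma (mulT u (iT u)) a = a"
  "sigma (mulT (iT u) u) a = a"
  by (simp_all add: sigma_idempotent_eq_id inv_sg_idempotent[OF inverse_T])

lemma sigma_cancel [simp]:
  "sigma u (sigma (iT u) a) = a"
  "sigma (iT u) (sigma u a) = a"
  by (simp_all flip: sigma_mulT)

lemma assoc_op_semidirect_mul: "assoc_op mul"
  unfolding assoc_op_def semidirect_mul_def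
  by (auto simp: inverse_semigroup_assoc[OF inverse_S] inverse_semigroup_assoc[OF inverse_T]
      sigma_mulS sigma_mulT)

definition semidirect_inv :: "'a \<times> 'b \<Rightarrow> 'a \<times> 'b" where
  "semidirect_inv = (\<lambda>(a, u). (sigma (iT u) (iS a), iT u))"

lemma semidirect_inv_regular:
  "mul (mul p (semidirect_inv p)) p = p"
  "mul (mul (semidirect_inv p) p) (semidirect_inv p) = semidirect_inv p"
  by (cases p; simp add: semidirect_inv_def inv_sg_regular[OF inverse_T] inv_sg_regular[OF inverse_S]
        flip: sigma_mulS sigma_mulT)+

lemma semidirect_inv_unique:
  assumes h1: "mul (mul (a, u) (x, w)) (a, u) = (a, u)"
    and h2: "mul (mul (x, w) (a, u)) (x, w) = (x, w)"
  shows "(x, w) = semidirect_inv (a, u)"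
proof -
  from h1 h2 have "mulT (mulT u w) u = u" "mulT (mulT w u) w = w" by auto
  then have w: "w = iT u" using inv_sg_eqI[OF inverse_T] by metis
  from h1 have "mulS (mulS a (sigma u x)) a = a" by (simp add: w)
  moreover from h2 have "mulS (mulS x (sigma w a)) x = x" by (simp add: w)
  then have "sigma u (mulS (mulS x (sigma w a)) x) = sigma u x" by simp
  then have "mulS (mulS (sigma u x) a) (sigma u x) = sigma u x"
    by (simp add: sigma_mulS w)
  ultimately have "iS a = sigma u x" by (rule inv_sg_eqI[OF inverse_S])
  then show ?thesis by (simp add: semidirect_inv_def w)
qed

lemma inverse_semigroup_semidirect_mul: "inverse_semigroup mul"
proof (rule inverse_semigroupI[where i = semidirect_inv])
  fix p q :: "'a \<times> 'b"
  assume "mul (mul p q) p = p" "mul (mul q p) q = q"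
  then show "q = semidirect_inv p"
    using semidirect_inv_unique by (metis surj_pair)
qed (fact assoc_op_semidirect_mul semidirect_inv_regular)+

lemma inv_sg_semidirect_mul: "inv_sg mul (a, u) = (sigma (iT u) (iS a), iT u)"
  using inv_sg_eqI[OF inverse_semigroup_semidirect_mul semidirect_inv_regular[of "(a, u)"]]
  by (simp add: semidirect_inv_def)

end

lemma assoc_op_asym_add:
  assumes "assoc_op addS" "assoc_op addT"
    and "\<forall>a. add_endo addT (delta a)"
    and "delta_cocycle addS addT delta bc"
  shows "assoc_op (asym_add addS addT delta bc)"
proof -
  have addT_assoc: "addT (addT x y) z = addT x (addT y z)" for x y z
    using assms(2) unfolding assoc_op_def by blast
  have "asym_add addS addT delta bc (asym_add addS addT delta bc (a, u) (b, v)) (c, w)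
      = asym_add addS addT delta bc (a, u) (asym_add addS addT delta bc (b, v) (c, w))" for a b c u v w
  proof -
    have "addT (addT (addT (bc (addS a b) c) (delta c (bc a b))) (delta c (delta b u))) (delta c v)
        = addT (addT (addT (bc a (addS b c)) (delta (addS b c) u)) (bc b c)) (delta c v)"
      using assms(4) unfolding delta_cocycle_def by blast
    then show ?thesis
      using assms(1,3) unfolding assoc_op_def add_endo_def by (simp add: addT_assoc)
  qed
  then show ?thesis
    unfolding assoc_op_def by simp
qed

lemma (in semidirect_inverse_semigroup) semidirect_mul_asym_add_distrib:
  assumes S: "left_inverse_semi_brace addS mulS"
    and T: "left_inverse_semi_brace addT mulT"
    and sigma_addS: "\<And>u a b. sigma u (addS a b) = addS (sigma u a) (sigma u b)"
    and cond: "\<And>a b c u v.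
       addT (addT (bc (mulS a (sigma u b)) (lam addS mulS a (sigma u c)))
                  (delta (lam addS mulS a (sigma u c)) (mulT u v)))
            (mulT u (addT (bc (sigma (iT u) (iS a)) c) (delta c (iT u))))
       = mulT u (addT (bc b c) (delta c v))"
  shows "mul p (asym_add addS addT delta bc q r)
    = asym_add addS addT delta bc (mul p q) (mul p (asym_add addS addT delta bc (inv_sg mul p) r))"
proof -
  obtain a u b v c w where pqr: "p = (a, u)" "q = (b, v)" "r = (c, w)"
    by (metis surj_pair)
  have distS: "mulS x (addS y z) = addS (mulS x y) (lam addS mulS x z)" for x y z
    using S unfolding left_inverse_semi_brace_def lam_def by blast
  have distT: "mulT x (addT y z) = addT (mulT x y) (mulT x (addT (iT x) z))" for x y z
    using T unfolding left_inverse_semi_brace_def by blast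
  have addT_assoc: "addT (addT x y) z = addT x (addT y z)" for x y z
    using T unfolding left_inverse_semi_brace_def assoc_op_def by blast
  define l where "l = lam addS mulS a (sigma u c)"
  define y where "y = addT (bc (sigma (iT u) (iS a)) c) (delta c (iT u))"
  have first: "mulS a (sigma u (addS b c)) = addS (mulS a (sigma u b)) l"
    by (simp only: sigma_addS distS l_def)
  have "mulT u (addT (addT (bc b c) (delta c v)) w)
      = addT (mulT u (addT (bc b c) (delta c v))) (mulT u (addT (iT u) w))"
    by (rule distT)
  also have "\<dots> = addT (addT (addT (bc (mulS a (sigma u b)) l) (delta l (mulT u v))) (mulT u y))
      (mulT u (addT (iT u) w))"
    unfolding l_def y_def cond ..
  also have "\<dots> = addT (addT (bc (mulS a (sigma u b)) l) (delta l (mulT u v))) (mulT u (addT y w))"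
    by (simp only: distT[of u y w] addT_assoc)
  finally have second: "mulT u (addT (addT (bc b c) (delta c v)) w)
      = addT (addT (bc (mulS a (sigma u b)) l) (delta l (mulT u v))) (mulT u (addT y w))" .
  have "mulS a (sigma u (addS (sigma (iT u) (iS a)) c)) = l"
    by (simp add: l_def lam_def sigma_addS)
  with first second show ?thesis
    by (simp add: pqr inv_sg_semidirect_mul y_def)
qed

theorem theorem52:
  fixes addS mulS :: "'a \<Rightarrow> 'a \<Rightarrow> 'a"
    and addT mulT :: "'b \<Rightarrow> 'b \<Rightarrow> 'b"
    and sigma :: "'b \<Rightarrow> 'a \<Rightarrow> 'a"
    and delta :: "'a \<Rightarrow> 'b \<Rightarrow> 'b"
    and bc :: "'a \<Rightarrow> 'a \<Rightarrow> 'b"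
  assumes S: "left_inverse_semi_brace addS mulS"
    and T: "left_inverse_semi_brace addT mulT"
    and sigma_aut: "\<forall>u. semi_brace_aut addS mulS (sigma u)"
    and sigma_hom: "\<forall>u v. sigma (mulT u v) = sigma u \<circ> sigma v"
    and delta_end: "\<forall>a. add_endo addT (delta a)"
    and cocycle: "delta_cocycle addS addT delta bc"
    and cond: "\<forall>a b c u v.
       addT (addT (bc (mulS a (sigma u b)) (lam addS mulS a (sigma u c)))
                  (delta (lam addS mulS a (sigma u c)) (mulT u v)))
            (mulT u (addT (bc (sigma (inv_sg mulT u) (inv_sg mulS a)) c)
                          (delta c (inv_sg mulT u))))
       = mulT u (addT (bc b c) (delta c v))"
  shows "left_inverse_semi_brace
           (\<lambda>(a, u) (b, v). (addS a b, addT (addT (bc a b) (delta b u)) v))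
           (\<lambda>(a, u) (b, v). (mulS a (sigma u b), mulT u v))"
proof -
  have S_parts: "assoc_op addS" "inverse_semigroup mulS"
    and T_parts: "assoc_op addT" "inverse_semigroup mulT"
    using S T by (simp_all add: left_inverse_semi_brace_def)
  interpret semidirect_inverse_semigroup mulS mulT sigma
  proof
    show "bij (sigma u)" "sigma u (mulS a b) = mulS (sigma u a) (sigma u b)" for u a b
      using sigma_aut unfolding semi_brace_aut_def by blast+
  qed (simp_all add: S_parts T_parts sigma_hom)
  have sigma_addS: "sigma u (addS a b) = addS (sigma u a) (sigma u b)" for u a b
    using sigma_aut unfolding semi_brace_aut_def by blast
  have "left_inverse_semi_brace (asym_add addS addT delta bc) (semidirect_mul mulS mulT sigma)"
    unfolding left_inverse_semi_brace_def
    using assoc_op_asym_add[OF S_parts(1) T_parts(1) delta_end cocycle]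
      inverse_semigroup_semidirect_mul
      semidirect_mul_asym_add_distrib[OF S T sigma_addS cond[rule_format]]
    by (intro conjI allI)
  then show ?thesis
    by (simp only: asym_add_def semidirect_mul_def)
qed

end
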